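(* Let $L$ be a finite periodic (toroidal) square lattice in two dimensions with lattice spacing $\Delta>0$, and for functions $f$ on $L$ write $\int f=\Delta^2\sum_{x\in L} f(x)$. Let $-\partial^2$ denote the lattice Laplacian (the finite-difference Laplacian, a positive semidefinite self-adjoint operator on functions on $L$). Fix $N\ge 1$, a constant $\mu>0$, a field $\hat M:L\to\{\text{real diagonal } N\times N \text{ matrices}\}$ and a source field $J:L\to\{\text{real } N\times N\text{ matrices}\}$, $x\mapsto (J_{ab}(x))_{a,b=1}^N$. For a field $O:L\to O(N)$ set $M(x)=O(x)^t\hat M(x)O(x)$ and let $K=K(O)$ be the operator on $\mathbb{C}^N$-valued functions on $L$ given by $$K_{aa'}=(-\partial^2+\mu)\,\delta_{aa'}-i\,M_{aa'},$$ where $M$ acts by pointwise multiplication by the matrix $M(x)$. Then $K(O)$ is invertible, and the function $$O\longmapsto \exp\Big[-\tfrac12\int J_{ab}\,(K_{aa'})^{-1}J_{a'b}\Big]$$ (summation over repeated indices $a,a',b$, the inverse $K^{-1}$ acting on the functions $x\mapsto J_{a'b}(x)$, $a'=1,\dots,N$, for each fixed $b$) is Lipschitz on the space of fields $O:L\to O(N)$ with respect to the metric $$d(O,O')=\int \|O-O'\|_{HS}=\Delta^2\sum_{x\in L}\|O(x)-O'(x)\|_{HS},$$ where $\|\cdot\|_{HS}$ is the Hilbert–Schmidt norm; i.e. there is a constant $C$ (depending on $J,\hat M,\mu$ and the lattice, but not on $O,O'$) such that the absolute difference of the function's values at $O$ and $O'$ is at most $C\,d(O,O')$.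
   Context: This is the lattice regularization of the $O(N)$ principal chiral model: $\hat M$ is the diagonalized (and contour-shifted by $i\mu$) Lagrange multiplier field, $O$ the pointwise diagonalizing orthogonal matrices, and $K$ the resulting quadratic form kernel after integrating out the original field. Indices $a,a',b$ range over $1,\dots,N$. *)

theory Defs
  imports "HOL-Analysis.Analysis"
begin

text \<open>Periodic lattice: sites (i,j) with i < n1, j < n2 (torus Z_n1 x Z_n2), spacing Delta.
  Internal (colour) indices a = 1..N are modelled by a finite type 'n with N = CARD('n).\<close>

definition sites :: "nat \<Rightarrow> nat \<Rightarrow> (nat \<times> nat) set" where
  "sites n1 n2 = {..<n1} \<times> {..<n2}"

definition lint :: "real \<Rightarrow> nat \<Rightarrow> nat \<Rightarrow> (nat \<times> nat \<Rightarrow> 'a::real_vector) \<Rightarrow> 'a" where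
  "lint Delta n1 n2 f = Delta\<^sup>2 *\<^sub>R (\<Sum>x\<in>sites n1 n2. f x)"

definition neg_lap :: "real \<Rightarrow> nat \<Rightarrow> nat \<Rightarrow> (nat \<times> nat \<Rightarrow> complex) \<Rightarrow> nat \<times> nat \<Rightarrow> complex" where
  "neg_lap Delta n1 n2 f x = (case x of (i, j) \<Rightarrow>
     (4 * f (i, j) - f ((i + 1) mod n1, j) - f ((i + n1 - 1) mod n1, j)
        - f (i, (j + 1) mod n2) - f (i, (j + n2 - 1) mod n2)) / complex_of_real (Delta\<^sup>2))"

definition fields :: "nat \<Rightarrow> nat \<Rightarrow> (nat \<times> nat \<Rightarrow> complex ^ 'n) set" where
  "fields n1 n2 = {F. \<forall>x. x \<notin> sites n1 n2 \<longrightarrow> F x = 0}"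

definition Mfield :: "(nat \<times> nat \<Rightarrow> real^'n^'n) \<Rightarrow> (nat \<times> nat \<Rightarrow> real^'n^'n) \<Rightarrow> nat \<times> nat \<Rightarrow> real^'n^'n" where
  "Mfield Mhat Q x = transpose (Q x) ** Mhat x ** Q x"

definition Kop :: "real \<Rightarrow> nat \<Rightarrow> nat \<Rightarrow> real \<Rightarrow> (nat \<times> nat \<Rightarrow> real^'n^'n)
    \<Rightarrow> (nat \<times> nat \<Rightarrow> complex ^ 'n) \<Rightarrow> (nat \<times> nat \<Rightarrow> complex ^ 'n)" where
  "Kop Delta n1 n2 mu M F = (\<lambda>x. if x \<in> sites n1 n2 then
      (\<chi> a. neg_lap Delta n1 n2 (\<lambda>y. F y $ a) x + complex_of_real mu * F x $ a
             - \<i> * (\<Sum>a'\<in>UNIV. complex_of_real (M x $ a $ a') * F x $ a'))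
    else 0)"

definition Jcol :: "nat \<Rightarrow> nat \<Rightarrow> (nat \<times> nat \<Rightarrow> real^'n^'n) \<Rightarrow> 'n \<Rightarrow> (nat \<times> nat \<Rightarrow> complex ^ 'n)" where
  "Jcol n1 n2 J b = (\<lambda>x. if x \<in> sites n1 n2 then (\<chi> a'. complex_of_real (J x $ a' $ b)) else 0)"

definition gen_fun :: "real \<Rightarrow> nat \<Rightarrow> nat \<Rightarrow> real \<Rightarrow> (nat \<times> nat \<Rightarrow> real^'n^'n)
    \<Rightarrow> (nat \<times> nat \<Rightarrow> real^'n^'n) \<Rightarrow> (nat \<times> nat \<Rightarrow> real^'n^'n) \<Rightarrow> complex" where
  "gen_fun Delta n1 n2 mu Mhat J Q =
     (let K = Kop Delta n1 n2 mu (Mfield Mhat Q);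
          G = (\<lambda>b. inv_into (fields n1 n2) K (Jcol n1 n2 J b))
      in exp (- (1/2) * lint Delta n1 n2
            (\<lambda>x. \<Sum>b\<in>UNIV. \<Sum>a\<in>UNIV. complex_of_real (J x $ a $ b) * (G b x $ a))))"

definition hs_norm :: "real^'n^'n \<Rightarrow> real" where
  "hs_norm A = sqrt (\<Sum>i\<in>UNIV. \<Sum>j\<in>UNIV. (A $ i $ j)\<^sup>2)"

definition field_dist :: "real \<Rightarrow> nat \<Rightarrow> nat \<Rightarrow> (nat \<times> nat \<Rightarrow> real^'n^'n) \<Rightarrow> (nat \<times> nat \<Rightarrow> real^'n^'n) \<Rightarrow> real" where
  "field_dist Delta n1 n2 Q Q' = lint Delta n1 n2 (\<lambda>x. hs_norm (Q x - Q' x))"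

end

theory Submission
  imports Defs "HOL-Library.Function_Algebras"
begin

(* For a symmetric real field M, the imaginary part -iM of K contributes nothing to Re <F, K F>,
   and the lattice Laplacian is positive because sum_x <F x, F x - F (x + e)> >= 0 for every
   lattice shift e.  Hence mu ||F|| <= ||K F||: K is injective, and so bijective on the
   finite-dimensional space of lattice fields.  With G = K^-1 J and G' = K'^-1 J one has
   K (G - G') = (K' - K) G' = i (M - M') G', so ||G - G'|| <= ||M - M'|| ||J|| / mu^2, and
   M = O^t Mhat O is Lipschitz in O because orthogonal matrices have entries of modulus <= 1.
   Finally Re <J, K^-1 J> = Re <K G, G> >= 0, so the exponent has non-positive real part,
   where exp is 1-Lipschitz. *)

section \<open>Linear algebra on spaces of functions\<close>

lemma sum_fun_apply: "(\<Sum>i\<in>A. f i) x = (\<Sum>i\<in>A. f i x)"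
  by (induction A rule: infinite_finite_induct) auto

(* The library provides no real_vector instance for function types; this scaling turns
   lattice fields into a real vector space in the sense of the locale vector_space. *)
definition fun_scaleR :: "real \<Rightarrow> ('x \<Rightarrow> 'v::real_vector) \<Rightarrow> 'x \<Rightarrow> 'v" where
  "fun_scaleR c F = (\<lambda>x. c *\<^sub>R F x)"

lemma vector_space_fun_scaleR: "vector_space (fun_scaleR :: real \<Rightarrow> ('x \<Rightarrow> 'v::real_vector) \<Rightarrow> _)"
  by unfold_locales (simp_all add: fun_scaleR_def fun_eq_iff scaleR_add_right scaleR_add_left)

lemma (in vector_space) linear_inj_on_imp_surj_on:
  assumes lin: "Vector_Spaces.linear scale scale f" and sub: "subspace V"
    and fin: "finite B0" and span_B0: "V \<subseteq> span B0"
    and into: "f ` V \<subseteq> V" and inj: "inj_on f V"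
  shows "f ` V = V"
proof -
  obtain B where B: "B \<subseteq> V" "independent B" "V \<subseteq> span B"
    by (meson basis_exists)
  have finB: "finite B"
    using independent_span_bound[OF fin B(2)] B(1) span_B0 by blast
  have spanB: "span B = V"
    using B span_minimal[of B V] sub by blast
  interpret vs: vector_space_pair scale scale by unfold_locales
  have ind_fB: "independent (f ` B)"
    using vs.linear_independent_injective_image[OF lin B(2)] inj spanB by auto
  have card_fB: "card (f ` B) = card B"
    using card_image inj_on_subset[OF inj B(1)] by blast
  have "V \<subseteq> span (f ` B)"
  proof
    fix v assume v: "v \<in> V"
    show "v \<in> span (f ` B)"
    proof (rule ccontr)
      assume v_out: "v \<notin> span (f ` B)"
      then have "independent (insert v (f ` B))"
        using ind_fB independent_insertI by auto
      moreover have "insert v (f ` B) \<subseteq> span B"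
        using v B(1) into spanB by auto
      ultimately have "card (insert v (f ` B)) \<le> card B"
        using independent_span_bound[OF finB] by blast
      moreover have "v \<notin> f ` B"
        using v_out span_superset by blast
      ultimately show False
        using card_fB finB by simp
    qed
  qed
  then have "V \<subseteq> f ` span B"
    using vs.linear_span_image[OF lin] by simp
  then show ?thesis
    using spanB into by auto
qed

section \<open>Real matrices acting on complex vectors\<close>

lemma scaleR_complex: "r *\<^sub>R (z::complex) = complex_of_real r * z"
  by (simp add: scaleR_conv_of_real)

definition imat_mult :: "real^'n^'n \<Rightarrow> complex^'n \<Rightarrow> complex^'n" where
  "imat_mult A v = (\<chi> a. \<i> * (\<Sum>a'\<in>UNIV. complex_of_real (A $ a $ a') * v $ a'))"

lemma imat_mult_add: "imat_mult A (v + w) = imat_mult A v + imat_mult A w"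
  by (simp add: imat_mult_def vec_eq_iff distrib_left sum.distrib)

lemma imat_mult_scaleR: "imat_mult A (c *\<^sub>R v) = c *\<^sub>R imat_mult A v"
  by (simp add: imat_mult_def vec_eq_iff scaleR_complex sum_distrib_left mult_ac)

lemma imat_mult_diff_left: "imat_mult A v - imat_mult B v = imat_mult (A - B) v"
  by (simp add: imat_mult_def vec_eq_iff left_diff_distrib right_diff_distrib sum_subtractf)

lemma inner_imat_mult_self:
  fixes v :: "complex^'n"
  assumes "transpose A = A"
  shows "inner v (imat_mult A v) = 0"
proof -
  have sym: "A $ a $ b = A $ b $ a" for a b
    using assms by (metis transpose_def vec_lambda_beta)
  define T where "T = (\<Sum>a\<in>UNIV. \<Sum>b\<in>UNIV. A $ a $ b * (Re (v $ a) * Im (v $ b)))"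
  have "(\<Sum>a\<in>UNIV. \<Sum>b\<in>UNIV. A $ a $ b * (Im (v $ a) * Re (v $ b)))
      = (\<Sum>b\<in>UNIV. \<Sum>a\<in>UNIV. A $ a $ b * (Im (v $ a) * Re (v $ b)))"
    by (rule sum.swap)
  also have "\<dots> = T"
    unfolding T_def by (intro sum.cong refl) (simp add: sym mult_ac)
  finally have swap: "(\<Sum>a\<in>UNIV. \<Sum>b\<in>UNIV. A $ a $ b * (Im (v $ a) * Re (v $ b))) = T" .
  have "inner v (imat_mult A v) = (\<Sum>a\<in>UNIV. \<Sum>b\<in>UNIV. A $ a $ b * (Im (v $ a) * Re (v $ b))) - T"
    unfolding T_def
    by (simp add: inner_vec_def imat_mult_def inner_complex_def sum_distrib_left
        sum_subtractf[symmetric] sum.distrib[symmetric] algebra_simps)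
  then show ?thesis using swap by simp
qed

definition entry_l1 :: "real^'n^'n \<Rightarrow> real" where
  "entry_l1 A = (\<Sum>a\<in>UNIV. \<Sum>a'\<in>UNIV. \<bar>A $ a $ a'\<bar>)"

lemma norm_imat_mult_le: "norm (imat_mult A v) \<le> entry_l1 A * norm v"
proof -
  have "norm (imat_mult A v) \<le> (\<Sum>a\<in>UNIV. norm (imat_mult A v $ a))"
    unfolding norm_vec_def by (rule L2_set_le_sum) simp
  also have "\<dots> \<le> (\<Sum>a\<in>UNIV. (\<Sum>a'\<in>UNIV. \<bar>A $ a $ a'\<bar>) * norm v)"
  proof (rule sum_mono)
    fix a
    have "norm (imat_mult A v $ a) = norm (\<Sum>a'\<in>UNIV. complex_of_real (A $ a $ a') * v $ a')"
      by (simp add: imat_mult_def norm_mult)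
    also have "\<dots> \<le> (\<Sum>a'\<in>UNIV. norm (complex_of_real (A $ a $ a') * v $ a'))"
      by (rule norm_sum)
    also have "\<dots> \<le> (\<Sum>a'\<in>UNIV. \<bar>A $ a $ a'\<bar> * norm v)"
      by (intro sum_mono) (simp add: norm_mult mult_left_mono Finite_Cartesian_Product.norm_nth_le)
    finally show "norm (imat_mult A v $ a) \<le> (\<Sum>a'\<in>UNIV. \<bar>A $ a $ a'\<bar>) * norm v"
      by (simp add: sum_distrib_right)
  qed
  also have "\<dots> = entry_l1 A * norm v"
    by (simp add: entry_l1_def sum_distrib_right)
  finally show ?thesis .
qed

lemma orthogonal_matrix_entry_le_1:
  assumes "orthogonal_matrix (Q :: real^'n^'n)"
  shows "\<bar>Q $ i $ j\<bar> \<le> 1"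
proof -
  have "norm (column j Q) = 1"
    using assms orthogonal_matrix_orthonormal_columns by blast
  moreover have "\<bar>column j Q $ i\<bar> \<le> norm (column j Q)"
    by (rule component_le_norm_cart)
  ultimately show ?thesis
    by (simp add: column_def)
qed

lemma entry_le_hs_norm: "\<bar>A $ i $ j\<bar> \<le> hs_norm A"
proof -
  have "(A $ i $ j)\<^sup>2 \<le> (\<Sum>j'\<in>UNIV. (A $ i $ j')\<^sup>2)"
    by (rule member_le_sum) auto
  also have "\<dots> \<le> (\<Sum>i'\<in>UNIV. \<Sum>j'\<in>UNIV. (A $ i' $ j')\<^sup>2)"
    by (rule member_le_sum[where f = "\<lambda>i'. \<Sum>j'\<in>UNIV. (A $ i' $ j')\<^sup>2"]) (auto intro: sum_nonneg)
  finally show ?thesis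
    unfolding hs_norm_def by (simp add: real_le_rsqrt)
qed

lemma hs_norm_nonneg: "0 \<le> hs_norm A"
  by (simp add: hs_norm_def sum_nonneg)

lemma conj_diagonal_entry:
  assumes "\<forall>a b. a \<noteq> b \<longrightarrow> D $ a $ b = 0"
  shows "(transpose Q ** D ** Q) $ a $ a' = (\<Sum>k\<in>UNIV. Q $ k $ a * D $ k $ k * Q $ k $ a')"
proof -
  have diag: "D $ c $ k = (if c = k then D $ k $ k else 0)" for c k
    using assms by auto
  have "(transpose Q ** D ** Q) $ a $ a' = (\<Sum>k\<in>UNIV. (\<Sum>c\<in>UNIV. Q $ c $ a * D $ c $ k) * Q $ k $ a')"
    by (simp add: matrix_matrix_mult_def transpose_def)
  also have "\<dots> = (\<Sum>k\<in>UNIV. Q $ k $ a * D $ k $ k * Q $ k $ a')"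
    by (subst diag) (simp add: if_distrib sum.delta' cong: if_cong)
  finally show ?thesis .
qed

lemma abs_entry_product_diff_le:
  assumes "orthogonal_matrix Q" and "orthogonal_matrix Q'"
  shows "\<bar>Q $ k $ a * Q $ k $ a' - Q' $ k $ a * Q' $ k $ a'\<bar> \<le> 2 * hs_norm (Q - Q')"
proof -
  have "Q $ k $ a * Q $ k $ a' - Q' $ k $ a * Q' $ k $ a'
      = (Q - Q') $ k $ a * Q $ k $ a' + Q' $ k $ a * (Q - Q') $ k $ a'"
    by (simp add: algebra_simps)
  also have "\<bar>\<dots>\<bar> \<le> \<bar>(Q - Q') $ k $ a\<bar> * \<bar>Q $ k $ a'\<bar> + \<bar>Q' $ k $ a\<bar> * \<bar>(Q - Q') $ k $ a'\<bar>"
    by (rule order_trans[OF abs_triangle_ineq]) (simp add: abs_mult)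
  also have "\<dots> \<le> hs_norm (Q - Q') * 1 + 1 * hs_norm (Q - Q')"
    using assms by (intro add_mono mult_mono entry_le_hs_norm orthogonal_matrix_entry_le_1)
      (simp_all add: hs_norm_nonneg)
  finally show ?thesis by simp
qed

lemma entry_l1_conj_diagonal_diff_le:
  fixes D Q Q' :: "real^'n^'n"
  assumes diag: "\<forall>a b. a \<noteq> b \<longrightarrow> D $ a $ b = 0"
    and Q: "orthogonal_matrix Q" and Q': "orthogonal_matrix Q'"
  shows "entry_l1 (transpose Q ** D ** Q - transpose Q' ** D ** Q')
    \<le> 2 * real CARD('n) ^ 2 * (\<Sum>k\<in>UNIV. \<bar>D $ k $ k\<bar>) * hs_norm (Q - Q')"
proof -
  let ?d = "\<Sum>k\<in>UNIV. \<bar>D $ k $ k\<bar>"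
  have "\<bar>(transpose Q ** D ** Q - transpose Q' ** D ** Q') $ a $ a'\<bar> \<le> 2 * ?d * hs_norm (Q - Q')"
    for a a'
  proof -
    have "(transpose Q ** D ** Q - transpose Q' ** D ** Q') $ a $ a'
        = (\<Sum>k\<in>UNIV. D $ k $ k * (Q $ k $ a * Q $ k $ a' - Q' $ k $ a * Q' $ k $ a'))"
      by (simp add: conj_diagonal_entry[OF diag] algebra_simps flip: sum_subtractf)
    also have "\<bar>\<dots>\<bar> \<le> (\<Sum>k\<in>UNIV. \<bar>D $ k $ k\<bar> * (2 * hs_norm (Q - Q')))"
      by (rule order_trans[OF sum_abs sum_mono])
        (simp add: abs_mult mult_left_mono abs_entry_product_diff_le[OF Q Q'])
    also have "\<dots> = ?d * (2 * hs_norm (Q - Q'))"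
      by (rule sum_distrib_right[symmetric])
    finally show ?thesis
      by (simp add: mult_ac)
  qed
  then have "entry_l1 (transpose Q ** D ** Q - transpose Q' ** D ** Q')
      \<le> (\<Sum>a\<in>(UNIV::'n set). \<Sum>a'\<in>(UNIV::'n set). 2 * ?d * hs_norm (Q - Q'))"
    unfolding entry_l1_def by (intro sum_mono)
  also have "\<dots> = 2 * real CARD('n) ^ 2 * ?d * hs_norm (Q - Q')"
    by (simp add: power2_eq_square)
  finally show ?thesis .
qed

section \<open>Fields on the periodic lattice\<close>

definition torus_succ :: "nat \<Rightarrow> nat \<Rightarrow> nat" where
  "torus_succ n i = Suc i mod n"

definition torus_pred :: "nat \<Rightarrow> nat \<Rightarrow> nat" where
  "torus_pred n i = (i + n - 1) mod n"

lemma torus_succ_less: "i < n \<Longrightarrow> torus_succ n i < n"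
  and torus_pred_less: "i < n \<Longrightarrow> torus_pred n i < n"
  by (simp_all add: torus_succ_def torus_pred_def)

lemma torus_pred_pos: "0 < i \<Longrightarrow> i < n \<Longrightarrow> torus_pred n i = i - 1"
proof -
  assume "0 < i" "i < n"
  then have "i + n - 1 = (i - 1) + n" by simp
  then show ?thesis unfolding torus_pred_def using \<open>i < n\<close> by (simp only: mod_add_self2) simp
qed

lemma torus_pred_succ: "i < n \<Longrightarrow> torus_pred n (torus_succ n i) = i"
  by (cases "Suc i = n") (auto simp: torus_succ_def torus_pred_def)

lemma torus_succ_pred: "i < n \<Longrightarrow> torus_succ n (torus_pred n i) = i"
proof (cases "i = 0")
  case True
  assume "i < n"
  then have "torus_pred n i = n - 1" using True by (simp add: torus_pred_def)
  then show ?thesis using True \<open>i < n\<close> by (simp add: torus_succ_def)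
qed (simp add: torus_pred_pos torus_succ_def)

lemma bij_betw_torus_succ: "bij_betw (torus_succ n) {..<n} {..<n}"
  by (rule bij_betw_byWitness[where f' = "torus_pred n"])
    (auto simp: torus_pred_succ torus_succ_pred torus_succ_less torus_pred_less)

lemma bij_betw_torus_pred: "bij_betw (torus_pred n) {..<n} {..<n}"
  by (rule bij_betw_byWitness[where f' = "torus_succ n"])
    (auto simp: torus_pred_succ torus_succ_pred torus_succ_less torus_pred_less)

definition torus_shifts :: "nat \<Rightarrow> nat \<Rightarrow> (nat \<times> nat \<Rightarrow> nat \<times> nat) list" where
  "torus_shifts n1 n2 = [map_prod (torus_succ n1) id, map_prod (torus_pred n1) id,
                         map_prod id (torus_succ n2), map_prod id (torus_pred n2)]"

lemma bij_betw_torus_shifts: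
  "s \<in> set (torus_shifts n1 n2) \<Longrightarrow> bij_betw s (sites n1 n2) (sites n1 n2)"
  by (auto simp: torus_shifts_def sites_def intro!: bij_betw_map_prod
      bij_betw_torus_succ bij_betw_torus_pred)

definition lattice_lap :: "real \<Rightarrow> nat \<Rightarrow> nat \<Rightarrow> (nat \<times> nat \<Rightarrow> 'a::real_vector) \<Rightarrow> nat \<times> nat \<Rightarrow> 'a" where
  "lattice_lap Delta n1 n2 F x = (1 / Delta\<^sup>2) *\<^sub>R (\<Sum>s\<leftarrow>torus_shifts n1 n2. F x - F (s x))"

lemma lattice_lap_add:
  "lattice_lap Delta n1 n2 (F + G) x = lattice_lap Delta n1 n2 F x + lattice_lap Delta n1 n2 G x"
  by (simp add: lattice_lap_def torus_shifts_def algebra_simps)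

lemma lattice_lap_scaleR:
  "lattice_lap Delta n1 n2 (\<lambda>y. c *\<^sub>R F y) x = c *\<^sub>R lattice_lap Delta n1 n2 F x"
  by (simp add: lattice_lap_def torus_shifts_def scaleR_diff_right scaleR_add_right)

lemma lattice_lap_component:
  "lattice_lap Delta n1 n2 F x $ a = neg_lap Delta n1 n2 (\<lambda>y. F y $ a) x"
proof -
  obtain i j where x: "x = (i, j)" by fastforce
  show ?thesis
    unfolding x lattice_lap_def torus_shifts_def neg_lap_def
    by (simp add: torus_succ_def torus_pred_def scaleR_complex divide_inverse)
qed

lemma sum_inner_diff_shift_nonneg:
  fixes F :: "'a \<Rightarrow> 'b::real_inner"
  assumes "bij_betw s S S"
  shows "0 \<le> (\<Sum>x\<in>S. inner (F x) (F x - F (s x)))"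
proof -
  have "(\<Sum>x\<in>S. inner (F x) (F (s x))) \<le> (\<Sum>x\<in>S. ((norm (F x))\<^sup>2 + (norm (F (s x)))\<^sup>2) / 2)"
  proof (rule sum_mono)
    fix x
    have "inner (F x) (F (s x)) \<le> norm (F x) * norm (F (s x))"
      by (rule norm_cauchy_schwarz)
    also have "\<dots> \<le> ((norm (F x))\<^sup>2 + (norm (F (s x)))\<^sup>2) / 2"
      using sum_squares_bound[of "norm (F x)" "norm (F (s x))"] by simp
    finally show "inner (F x) (F (s x)) \<le> ((norm (F x))\<^sup>2 + (norm (F (s x)))\<^sup>2) / 2" .
  qed
  also have "\<dots> = (\<Sum>x\<in>S. (norm (F x))\<^sup>2)"
    using sum.reindex_bij_betw[OF assms, of "\<lambda>y. (norm (F y))\<^sup>2"]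
    by (simp add: sum.distrib flip: sum_divide_distrib)
  finally show ?thesis
    by (simp add: inner_diff_right sum_subtractf power2_norm_eq_inner)
qed

lemma lattice_lap_nonneg:
  fixes F :: "nat \<times> nat \<Rightarrow> 'a::real_inner"
  shows "0 \<le> (\<Sum>x\<in>sites n1 n2. inner (F x) (lattice_lap Delta n1 n2 F x))"
proof -
  have "(\<Sum>x\<in>sites n1 n2. inner (F x) (lattice_lap Delta n1 n2 F x))
      = (1 / Delta\<^sup>2) * (\<Sum>s\<leftarrow>torus_shifts n1 n2. \<Sum>x\<in>sites n1 n2. inner (F x) (F x - F (s x)))"
    by (simp add: lattice_lap_def torus_shifts_def inner_add_right sum.distrib sum_distrib_left
        flip: sum_divide_distrib)
  also have "0 \<le> \<dots>"
    using sum_inner_diff_shift_nonneg[OF bij_betw_torus_shifts]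
    by (intro mult_nonneg_nonneg sum_list_nonneg) auto
  finally show ?thesis .
qed

lemma finite_sites [simp]: "finite (sites n1 n2)"
  by (simp add: sites_def)

lemma fields_outside: "F \<in> fields n1 n2 \<Longrightarrow> x \<notin> sites n1 n2 \<Longrightarrow> F x = 0"
  unfolding fields_def by blast

definition field_norm :: "nat \<Rightarrow> nat \<Rightarrow> (nat \<times> nat \<Rightarrow> 'a::real_normed_vector) \<Rightarrow> real" where
  "field_norm n1 n2 F = L2_set (\<lambda>x. norm (F x)) (sites n1 n2)"

lemma field_norm_nonneg: "0 \<le> field_norm n1 n2 F"
  by (simp add: field_norm_def)

lemma norm_le_field_norm: "x \<in> sites n1 n2 \<Longrightarrow> norm (F x) \<le> field_norm n1 n2 F"
  unfolding field_norm_def by (rule member_le_L2_set) simp_all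

lemma power2_field_norm: "(field_norm n1 n2 F)\<^sup>2 = (\<Sum>x\<in>sites n1 n2. (norm (F x))\<^sup>2)"
  by (simp add: field_norm_def L2_set_def sum_nonneg)

lemma field_norm_eq_0_iff: "F \<in> fields n1 n2 \<Longrightarrow> field_norm n1 n2 F = 0 \<longleftrightarrow> F = 0"
  by (auto simp: field_norm_def L2_set_eq_0_iff fields_def fun_eq_iff)

lemma field_norm_zero: "field_norm n1 n2 0 = 0"
  by (simp add: field_norm_def L2_set_0')

lemma sum_inner_le_field_norm:
  "(\<Sum>x\<in>sites n1 n2. inner (F x) (G x)) \<le> field_norm n1 n2 F * field_norm n1 n2 G"
proof -
  have "(\<Sum>x\<in>sites n1 n2. inner (F x) (G x)) \<le> (\<Sum>x\<in>sites n1 n2. \<bar>norm (F x)\<bar> * \<bar>norm (G x)\<bar>)"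
    by (rule sum_mono) (simp add: norm_cauchy_schwarz)
  also have "\<dots> \<le> field_norm n1 n2 F * field_norm n1 n2 G"
    unfolding field_norm_def by (rule L2_set_mult_ineq)
  finally show ?thesis .
qed

lemma field_norm_le_sum: "field_norm n1 n2 F \<le> (\<Sum>x\<in>sites n1 n2. norm (F x))"
  unfolding field_norm_def by (rule L2_set_le_sum) simp

section \<open>The operator K\<close>

lemma Kop_eq:
  "x \<in> sites n1 n2 \<Longrightarrow>
    Kop Delta n1 n2 mu M F x = lattice_lap Delta n1 n2 F x + mu *\<^sub>R F x - imat_mult (M x) (F x)"
  by (simp add: vec_eq_iff Kop_def lattice_lap_component imat_mult_def scaleR_complex)

lemma Kop_outside: "x \<notin> sites n1 n2 \<Longrightarrow> Kop Delta n1 n2 mu M F x = 0"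
  by (simp add: Kop_def)

lemma Kop_in_fields: "Kop Delta n1 n2 mu M F \<in> fields n1 n2"
  by (simp add: fields_def Kop_outside)

lemma Kop_linear:
  fixes M :: "nat \<times> nat \<Rightarrow> real^'n^'n"
  shows "Vector_Spaces.linear fun_scaleR fun_scaleR (Kop Delta n1 n2 mu M)"
proof -
  let ?K = "Kop Delta n1 n2 mu M"
  have "?K (F + G) x = ?K F x + ?K G x" for F G :: "nat \<times> nat \<Rightarrow> complex^'n" and x
    by (cases "x \<in> sites n1 n2")
      (simp_all add: Kop_eq Kop_outside lattice_lap_add imat_mult_add scaleR_add_right)
  moreover have "?K (fun_scaleR c F) x = c *\<^sub>R ?K F x" for F :: "nat \<times> nat \<Rightarrow> complex^'n" and c x
    by (cases "x \<in> sites n1 n2")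
      (simp_all add: Kop_eq Kop_outside fun_scaleR_def lattice_lap_scaleR imat_mult_scaleR
        algebra_simps)
  ultimately show ?thesis
    using vector_space_fun_scaleR by (auto simp: Vector_Spaces.linear_iff fun_scaleR_def)
qed

lemma Kop_coercive:
  fixes F :: "nat \<times> nat \<Rightarrow> complex^'n"
  assumes "\<forall>x\<in>sites n1 n2. transpose (M x) = M x"
  shows "mu * (\<Sum>x\<in>sites n1 n2. (norm (F x))\<^sup>2)
    \<le> (\<Sum>x\<in>sites n1 n2. inner (F x) (Kop Delta n1 n2 mu M F x))"
proof -
  have "(\<Sum>x\<in>sites n1 n2. inner (F x) (Kop Delta n1 n2 mu M F x))
      = (\<Sum>x\<in>sites n1 n2. inner (F x) (lattice_lap Delta n1 n2 F x))
        + mu * (\<Sum>x\<in>sites n1 n2. (norm (F x))\<^sup>2)"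
    using assms
    by (simp add: Kop_eq inner_add_right inner_diff_right inner_imat_mult_self power2_norm_eq_inner
        sum.distrib sum_distrib_left)
  then show ?thesis
    using lattice_lap_nonneg[where F = F and Delta = Delta] by simp
qed

lemma Kop_lower_bound:
  fixes F :: "nat \<times> nat \<Rightarrow> complex^'n"
  assumes "mu > 0" and "\<forall>x\<in>sites n1 n2. transpose (M x) = M x"
  shows "mu * field_norm n1 n2 F \<le> field_norm n1 n2 (Kop Delta n1 n2 mu M F)"
proof -
  have "mu * (field_norm n1 n2 F)\<^sup>2 = mu * (\<Sum>x\<in>sites n1 n2. (norm (F x))\<^sup>2)"
    by (simp add: power2_field_norm)
  also have "\<dots> \<le> (\<Sum>x\<in>sites n1 n2. inner (F x) (Kop Delta n1 n2 mu M F x))"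
    by (rule Kop_coercive[OF assms(2)])
  also have "\<dots> \<le> field_norm n1 n2 F * field_norm n1 n2 (Kop Delta n1 n2 mu M F)"
    by (rule sum_inner_le_field_norm)
  finally have le: "field_norm n1 n2 F * (mu * field_norm n1 n2 F)
      \<le> field_norm n1 n2 F * field_norm n1 n2 (Kop Delta n1 n2 mu M F)"
    by (simp add: power2_eq_square mult_ac)
  show ?thesis
  proof (cases "field_norm n1 n2 F = 0")
    case True
    then show ?thesis by (simp add: field_norm_nonneg)
  next
    case False
    then have "0 < field_norm n1 n2 F"
      using field_norm_nonneg[where F = F] by (simp add: less_le)
    with le show ?thesis by (rule mult_left_le_imp_le)
  qed
qed

lemma fields_subset_span:
  "fields n1 n2 \<subseteq> module.span fun_scaleR
     ((\<lambda>(x, b) y. if y = x then b else 0) ` (sites n1 n2 \<times> (Basis :: (complex^'n) set)))"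
proof
  interpret V: vector_space "fun_scaleR :: real \<Rightarrow> (nat \<times> nat \<Rightarrow> complex^'n) \<Rightarrow> _"
    by (rule vector_space_fun_scaleR)
  let ?e = "\<lambda>x b y. if y = x then b else (0 :: complex^'n)"
  fix F :: "nat \<times> nat \<Rightarrow> complex^'n"
  assume F: "F \<in> fields n1 n2"
  have "F = (\<Sum>x\<in>sites n1 n2. \<Sum>b\<in>Basis. fun_scaleR (F x \<bullet> b) (?e x b))"
  proof
    fix y
    have "(\<Sum>x\<in>sites n1 n2. \<Sum>b\<in>Basis. fun_scaleR (F x \<bullet> b) (?e x b)) y
        = (\<Sum>x\<in>sites n1 n2. \<Sum>b\<in>Basis. fun_scaleR (F x \<bullet> b) (?e x b) y)"
      by (simp add: sum_fun_apply)
    also have "\<dots> = (\<Sum>x\<in>sites n1 n2. if y = x then F x else 0)"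
    proof (intro sum.cong refl)
      fix x
      show "(\<Sum>b\<in>Basis. fun_scaleR (F x \<bullet> b) (?e x b) y) = (if y = x then F x else 0)"
        by (cases "y = x") (simp_all add: fun_scaleR_def euclidean_representation)
    qed
    also have "\<dots> = F y"
      using F by (cases "y \<in> sites n1 n2") (simp_all add: fields_outside)
    finally show "F y = (\<Sum>x\<in>sites n1 n2. \<Sum>b\<in>Basis. fun_scaleR (F x \<bullet> b) (?e x b)) y" ..
  qed
  also have "\<dots> \<in> V.span ((\<lambda>(x, b). ?e x b) ` (sites n1 n2 \<times> Basis))"
    by (intro V.span_sum V.span_scale V.span_base) auto
  finally show "F \<in> V.span ((\<lambda>(x, b). ?e x b) ` (sites n1 n2 \<times> Basis))" .
qed

lemma bij_betw_Kop:
  fixes M :: "nat \<times> nat \<Rightarrow> real^'n^'n"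
  assumes "mu > 0" and "\<forall>x\<in>sites n1 n2. transpose (M x) = M x"
  shows "bij_betw (Kop Delta n1 n2 mu M) (fields n1 n2) (fields n1 n2)"
proof -
  interpret V: vector_space "fun_scaleR :: real \<Rightarrow> (nat \<times> nat \<Rightarrow> complex^'n) \<Rightarrow> _"
    by (rule vector_space_fun_scaleR)
  interpret K: Vector_Spaces.linear fun_scaleR fun_scaleR "Kop Delta n1 n2 mu M"
    by (rule Kop_linear)
  have inj: "inj_on (Kop Delta n1 n2 mu M) (fields n1 n2)"
  proof (rule inj_onI)
    fix F G assume F: "F \<in> fields n1 n2" and G: "G \<in> fields n1 n2"
      and eq: "Kop Delta n1 n2 mu M F = Kop Delta n1 n2 mu M G"
    have "mu * field_norm n1 n2 (F - G) \<le> 0"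
      using Kop_lower_bound[OF assms, where F = "F - G" and Delta = Delta] eq
      by (simp add: K.diff field_norm_zero)
    then have "field_norm n1 n2 (F - G) = 0"
      using assms(1) field_norm_nonneg[of n1 n2 "F - G"] by (simp add: mult_le_0_iff)
    moreover have "F - G \<in> fields n1 n2"
      using F G by (simp add: fields_def)
    ultimately show "F = G"
      by (simp add: field_norm_eq_0_iff)
  qed
  have subspace: "V.subspace (fields n1 n2)"
    by (auto simp: V.subspace_def fields_def fun_scaleR_def)
  have "Kop Delta n1 n2 mu M ` fields n1 n2 = fields n1 n2"
    by (rule V.linear_inj_on_imp_surj_on[OF Kop_linear subspace _ fields_subset_span _ inj])
      (auto simp: Kop_in_fields)
  with inj show ?thesis
    by (simp add: bij_betw_def)
qed

section \<open>The inverse of K\<close>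

definition field_pairing ::
    "nat \<Rightarrow> nat \<Rightarrow> (nat \<times> nat \<Rightarrow> complex^'n) \<Rightarrow> (nat \<times> nat \<Rightarrow> complex^'n) \<Rightarrow> complex" where
  "field_pairing n1 n2 F G = (\<Sum>x\<in>sites n1 n2. \<Sum>a\<in>UNIV. cnj (F x $ a) * G x $ a)"

lemma Re_field_pairing: "Re (field_pairing n1 n2 F G) = (\<Sum>x\<in>sites n1 n2. inner (F x) (G x))"
  by (simp add: field_pairing_def inner_vec_def inner_complex_def)

lemma field_pairing_diff_right:
  "field_pairing n1 n2 F G - field_pairing n1 n2 F G' = field_pairing n1 n2 F (G - G')"
  by (simp add: field_pairing_def right_diff_distrib sum_subtractf)

lemma norm_field_pairing_le:
  "cmod (field_pairing n1 n2 F G) \<le> field_norm n1 n2 F * field_norm n1 n2 G"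
proof -
  have "cmod (\<Sum>a\<in>UNIV. cnj (F x $ a) * G x $ a) \<le> norm (F x) * norm (G x)" for x
  proof -
    have "cmod (\<Sum>a\<in>UNIV. cnj (F x $ a) * G x $ a) \<le> (\<Sum>a\<in>UNIV. \<bar>cmod (F x $ a)\<bar> * \<bar>cmod (G x $ a)\<bar>)"
      by (rule order_trans[OF norm_sum]) (simp add: norm_mult)
    also have "\<dots> \<le> norm (F x) * norm (G x)"
      unfolding norm_vec_def by (rule L2_set_mult_ineq)
    finally show ?thesis .
  qed
  then have "cmod (field_pairing n1 n2 F G) \<le> (\<Sum>x\<in>sites n1 n2. norm (F x) * norm (G x))"
    unfolding field_pairing_def by (rule order_trans[OF norm_sum sum_mono])
  also have "\<dots> \<le> field_norm n1 n2 F * field_norm n1 n2 G"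
    using L2_set_mult_ineq[of "\<lambda>x. norm (F x)" "\<lambda>x. norm (G x)"] by (simp add: field_norm_def)
  finally show ?thesis .
qed

definition Kop_inv :: "real \<Rightarrow> nat \<Rightarrow> nat \<Rightarrow> real \<Rightarrow> (nat \<times> nat \<Rightarrow> real^'n^'n)
    \<Rightarrow> (nat \<times> nat \<Rightarrow> complex^'n) \<Rightarrow> (nat \<times> nat \<Rightarrow> complex^'n)" where
  "Kop_inv Delta n1 n2 mu M = inv_into (fields n1 n2) (Kop Delta n1 n2 mu M)"

context
  fixes Delta mu :: real and n1 n2 :: nat and M :: "nat \<times> nat \<Rightarrow> real^'n^'n"
  assumes mu: "mu > 0" and symmetric: "\<forall>x\<in>sites n1 n2. transpose (M x) = M x"
begin

lemma Kop_Kop_inv: "H \<in> fields n1 n2 \<Longrightarrow> Kop Delta n1 n2 mu M (Kop_inv Delta n1 n2 mu M H) = H"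
  using bij_betw_Kop[OF mu symmetric] unfolding Kop_inv_def
  by (simp add: bij_betw_def f_inv_into_f)

lemma field_norm_Kop_inv_le:
  "H \<in> fields n1 n2 \<Longrightarrow> mu * field_norm n1 n2 (Kop_inv Delta n1 n2 mu M H) \<le> field_norm n1 n2 H"
  using Kop_lower_bound[OF mu symmetric, where F = "Kop_inv Delta n1 n2 mu M H" and Delta = Delta]
  by (simp add: Kop_Kop_inv)

lemma Re_field_pairing_Kop_inv_nonneg:
  assumes "H \<in> fields n1 n2"
  shows "0 \<le> Re (field_pairing n1 n2 H (Kop_inv Delta n1 n2 mu M H))"
proof -
  let ?G = "Kop_inv Delta n1 n2 mu M H"
  have "0 \<le> mu * (\<Sum>x\<in>sites n1 n2. (norm (?G x))\<^sup>2)"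
    using mu by (simp add: sum_nonneg)
  also have "\<dots> \<le> (\<Sum>x\<in>sites n1 n2. inner (?G x) (Kop Delta n1 n2 mu M ?G x))"
    by (rule Kop_coercive[OF symmetric])
  also have "\<dots> = Re (field_pairing n1 n2 H ?G)"
    by (simp add: Re_field_pairing Kop_Kop_inv[OF assms] inner_commute)
  finally show ?thesis .
qed

end

lemma field_norm_Kop_diff_le:
  "field_norm n1 n2 (Kop Delta n1 n2 mu M' G - Kop Delta n1 n2 mu M G)
     \<le> (\<Sum>x\<in>sites n1 n2. entry_l1 (M x - M' x)) * field_norm n1 n2 G"
proof -
  have "field_norm n1 n2 (Kop Delta n1 n2 mu M' G - Kop Delta n1 n2 mu M G)
      \<le> (\<Sum>x\<in>sites n1 n2. norm ((Kop Delta n1 n2 mu M' G - Kop Delta n1 n2 mu M G) x))"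
    by (rule field_norm_le_sum)
  also have "\<dots> = (\<Sum>x\<in>sites n1 n2. norm (imat_mult (M x - M' x) (G x)))"
    by (intro sum.cong refl) (simp add: Kop_eq fun_diff_def flip: imat_mult_diff_left)
  also have "\<dots> \<le> (\<Sum>x\<in>sites n1 n2. entry_l1 (M x - M' x) * field_norm n1 n2 G)"
    by (intro sum_mono order_trans[OF norm_imat_mult_le] mult_left_mono norm_le_field_norm)
      (simp_all add: entry_l1_def sum_nonneg)
  finally show ?thesis
    by (simp add: sum_distrib_right)
qed

lemma field_norm_Kop_inv_diff_le:
  assumes mu: "mu > 0"
    and M: "\<forall>x\<in>sites n1 n2. transpose (M x) = M x" and M': "\<forall>x\<in>sites n1 n2. transpose (M' x) = M' x"
    and H: "H \<in> fields n1 n2"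
  shows "field_norm n1 n2 (Kop_inv Delta n1 n2 mu M H - Kop_inv Delta n1 n2 mu M' H)
     \<le> (\<Sum>x\<in>sites n1 n2. entry_l1 (M x - M' x)) * field_norm n1 n2 H / mu\<^sup>2"
proof -
  let ?G = "Kop_inv Delta n1 n2 mu M H" and ?G' = "Kop_inv Delta n1 n2 mu M' H"
  let ?L = "\<Sum>x\<in>sites n1 n2. entry_l1 (M x - M' x)"
  interpret K: Vector_Spaces.linear fun_scaleR fun_scaleR "Kop Delta n1 n2 mu M"
    by (rule Kop_linear)
  have divide_by_mu: "N \<le> l * h / mu\<^sup>2" if "mu * N \<le> l * (h / mu)" for N l h :: real
    using that mu by (simp add: field_simps power2_eq_square)
  have "mu * field_norm n1 n2 (?G - ?G') \<le> field_norm n1 n2 (Kop Delta n1 n2 mu M (?G - ?G'))"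
    by (rule Kop_lower_bound[OF mu M])
  \<comment> \<open>resolvent identity\<close>
  also have "Kop Delta n1 n2 mu M (?G - ?G') = Kop Delta n1 n2 mu M' ?G' - Kop Delta n1 n2 mu M ?G'"
    by (simp add: K.diff Kop_Kop_inv[OF mu M H] Kop_Kop_inv[OF mu M' H])
  also have "field_norm n1 n2 \<dots> \<le> ?L * field_norm n1 n2 ?G'"
    by (rule field_norm_Kop_diff_le)
  also have "\<dots> \<le> ?L * (field_norm n1 n2 H / mu)"
    using field_norm_Kop_inv_le[OF mu M' H] mu
    by (intro mult_left_mono) (simp_all add: field_simps entry_l1_def sum_nonneg)
  finally show ?thesis
    by (rule divide_by_mu)
qed

section \<open>Lipschitz continuity of the generating functional\<close>

lemma norm_exp_diff_le:
  fixes z w :: complex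
  assumes "Re z \<le> 0" and "Re w \<le> 0"
  shows "cmod (exp z - exp w) \<le> cmod (z - w)"
proof -
  have "cmod (exp z - exp w) \<le> 1 * cmod (z - w)"
  proof (rule field_differentiable_bound[where S = "{z. Re z \<le> 0}" and f' = exp])
    show "convex {z. Re z \<le> 0}"
      by (rule convex_halfspace_Re_le)
    show "(exp has_field_derivative exp u) (at u within {z. Re z \<le> 0})" for u
      by (rule has_field_derivative_at_within) (rule DERIV_exp)
    show "cmod (exp u) \<le> 1" if "u \<in> {z. Re z \<le> 0}" for u
      using that by simp
  qed (use assms in auto)
  then show ?thesis by simp
qed

lemma symmetric_Mfield:
  assumes "\<forall>x a b. a \<noteq> b \<longrightarrow> Mhat x $ a $ b = 0"
  shows "transpose (Mfield Mhat Q x) = Mfield Mhat Q x"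
proof -
  have "Mhat x $ i $ j = Mhat x $ j $ i" for i j
    by (metis assms)
  then have "transpose (Mhat x) = Mhat x"
    by (simp add: vec_eq_iff transpose_def)
  then show ?thesis
    by (simp add: Mfield_def matrix_transpose_mul matrix_mul_assoc)
qed

lemma sum_entry_l1_Mfield_diff_le:
  fixes Mhat :: "nat \<times> nat \<Rightarrow> real^'n^'n"
  assumes diag: "\<forall>x a b. a \<noteq> b \<longrightarrow> Mhat x $ a $ b = 0"
    and Q: "\<forall>x\<in>sites n1 n2. orthogonal_matrix (Q x)"
    and Q': "\<forall>x\<in>sites n1 n2. orthogonal_matrix (Q' x)"
  shows "(\<Sum>x\<in>sites n1 n2. entry_l1 (Mfield Mhat Q x - Mfield Mhat Q' x))
    \<le> 2 * real CARD('n) ^ 2 * (\<Sum>y\<in>sites n1 n2. \<Sum>k\<in>UNIV. \<bar>Mhat y $ k $ k\<bar>)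
       * (\<Sum>x\<in>sites n1 n2. hs_norm (Q x - Q' x))"
proof -
  let ?m = "\<Sum>y\<in>sites n1 n2. \<Sum>k\<in>UNIV. \<bar>Mhat y $ k $ k\<bar>"
  have "entry_l1 (Mfield Mhat Q x - Mfield Mhat Q' x)
      \<le> 2 * real CARD('n) ^ 2 * ?m * hs_norm (Q x - Q' x)"
    if x: "x \<in> sites n1 n2" for x
  proof -
    have "entry_l1 (Mfield Mhat Q x - Mfield Mhat Q' x)
        \<le> 2 * real CARD('n) ^ 2 * (\<Sum>k\<in>UNIV. \<bar>Mhat x $ k $ k\<bar>) * hs_norm (Q x - Q' x)"
      unfolding Mfield_def using diag Q Q' x by (intro entry_l1_conj_diagonal_diff_le) blast+
    also have "\<dots> \<le> 2 * real CARD('n) ^ 2 * ?m * hs_norm (Q x - Q' x)"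
      using x
      by (intro mult_right_mono mult_left_mono
          member_le_sum[where f = "\<lambda>y. \<Sum>k\<in>UNIV. \<bar>Mhat y $ k $ k\<bar>"])
        (simp_all add: sum_nonneg hs_norm_nonneg)
    finally show ?thesis .
  qed
  then show ?thesis
    by (simp add: sum_distrib_left sum_mono)
qed

lemma Jcol_in_fields: "Jcol n1 n2 J b \<in> fields n1 n2"
  by (simp add: Jcol_def fields_def)

lemma gen_fun_eq:
  "gen_fun Delta n1 n2 mu Mhat J Q = exp (- (complex_of_real (Delta\<^sup>2) / 2) *
     (\<Sum>b\<in>UNIV. field_pairing n1 n2 (Jcol n1 n2 J b)
        (Kop_inv Delta n1 n2 mu (Mfield Mhat Q) (Jcol n1 n2 J b))))"
proof -
  let ?G = "\<lambda>b. Kop_inv Delta n1 n2 mu (Mfield Mhat Q) (Jcol n1 n2 J b)"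
  have "(\<Sum>x\<in>sites n1 n2. \<Sum>b\<in>UNIV. \<Sum>a\<in>UNIV. complex_of_real (J x $ a $ b) * ?G b x $ a)
      = (\<Sum>b\<in>UNIV. \<Sum>x\<in>sites n1 n2. \<Sum>a\<in>UNIV. complex_of_real (J x $ a $ b) * ?G b x $ a)"
    by (rule sum.swap)
  also have "\<dots> = (\<Sum>b\<in>UNIV. field_pairing n1 n2 (Jcol n1 n2 J b) (?G b))"
    by (simp add: field_pairing_def Jcol_def)
  finally show ?thesis
    unfolding gen_fun_def Let_def lint_def Kop_inv_def[symmetric]
    by (simp add: scaleR_complex)
qed

lemma norm_sum_field_pairing_Kop_inv_diff_le:
  assumes mu: "mu > 0"
    and M: "\<forall>x\<in>sites n1 n2. transpose (M x) = M x" and M': "\<forall>x\<in>sites n1 n2. transpose (M' x) = M' x"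
    and H: "\<forall>b\<in>B. H b \<in> fields n1 n2"
  shows "cmod ((\<Sum>b\<in>B. field_pairing n1 n2 (H b) (Kop_inv Delta n1 n2 mu M (H b)))
              - (\<Sum>b\<in>B. field_pairing n1 n2 (H b) (Kop_inv Delta n1 n2 mu M' (H b))))
    \<le> (\<Sum>b\<in>B. (field_norm n1 n2 (H b))\<^sup>2) * (\<Sum>x\<in>sites n1 n2. entry_l1 (M x - M' x)) / mu\<^sup>2"
proof -
  let ?L = "\<Sum>x\<in>sites n1 n2. entry_l1 (M x - M' x)"
  let ?D = "\<lambda>b. Kop_inv Delta n1 n2 mu M (H b) - Kop_inv Delta n1 n2 mu M' (H b)"
  have "cmod ((\<Sum>b\<in>B. field_pairing n1 n2 (H b) (Kop_inv Delta n1 n2 mu M (H b)))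
              - (\<Sum>b\<in>B. field_pairing n1 n2 (H b) (Kop_inv Delta n1 n2 mu M' (H b))))
      = cmod (\<Sum>b\<in>B. field_pairing n1 n2 (H b) (?D b))"
    by (simp add: field_pairing_diff_right flip: sum_subtractf)
  also have "\<dots> \<le> (\<Sum>b\<in>B. field_norm n1 n2 (H b) * field_norm n1 n2 (?D b))"
    by (rule order_trans[OF norm_sum sum_mono]) (rule norm_field_pairing_le)
  also have "\<dots> \<le> (\<Sum>b\<in>B. field_norm n1 n2 (H b) * (?L * field_norm n1 n2 (H b) / mu\<^sup>2))"
    using field_norm_Kop_inv_diff_le[OF mu M M'] H
    by (intro sum_mono mult_left_mono) (simp_all add: field_norm_nonneg)
  also have "\<dots> = (\<Sum>b\<in>B. (field_norm n1 n2 (H b))\<^sup>2 * (?L / mu\<^sup>2))"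
    by (rule sum.cong) (simp_all add: power2_eq_square)
  also have "\<dots> = (\<Sum>b\<in>B. (field_norm n1 n2 (H b))\<^sup>2) * (?L / mu\<^sup>2)"
    by (rule sum_distrib_right[symmetric])
  finally show ?thesis
    by simp
qed

lemma Re_sum_field_pairing_Kop_inv_nonneg:
  assumes "mu > 0" and "\<forall>x\<in>sites n1 n2. transpose (M x) = M x" and "\<forall>b\<in>B. H b \<in> fields n1 n2"
  shows "0 \<le> Re (\<Sum>b\<in>B. field_pairing n1 n2 (H b) (Kop_inv Delta n1 n2 mu M (H b)))"
  using Re_field_pairing_Kop_inv_nonneg[OF assms(1,2)] assms(3) by (simp add: sum_nonneg)

lemma norm_gen_fun_diff_le:
  assumes mu: "mu > 0" and diag: "\<forall>x a b. a \<noteq> b \<longrightarrow> Mhat x $ a $ b = 0"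
  shows "cmod (gen_fun Delta n1 n2 mu Mhat J Q - gen_fun Delta n1 n2 mu Mhat J Q')
    \<le> Delta\<^sup>2 / 2 * (\<Sum>b\<in>UNIV. (field_norm n1 n2 (Jcol n1 n2 J b))\<^sup>2)
       * (\<Sum>x\<in>sites n1 n2. entry_l1 (Mfield Mhat Q x - Mfield Mhat Q' x)) / mu\<^sup>2"
proof -
  let ?S = "\<lambda>Q. \<Sum>b\<in>UNIV. field_pairing n1 n2 (Jcol n1 n2 J b)
    (Kop_inv Delta n1 n2 mu (Mfield Mhat Q) (Jcol n1 n2 J b))"
  have symmetric: "\<forall>x\<in>sites n1 n2. transpose (Mfield Mhat Q x) = Mfield Mhat Q x" for Q
    using symmetric_Mfield[OF diag] by blast
  have Re_exponent: "Re (- (complex_of_real (Delta\<^sup>2) / 2) * ?S Q) \<le> 0" for Q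
  proof -
    have "0 \<le> Re (?S Q)"
      by (rule Re_sum_field_pairing_Kop_inv_nonneg[OF mu symmetric]) (simp add: Jcol_in_fields)
    then show ?thesis
      by (simp add: zero_le_mult_iff)
  qed
  have "cmod (gen_fun Delta n1 n2 mu Mhat J Q - gen_fun Delta n1 n2 mu Mhat J Q')
      \<le> cmod (- (complex_of_real (Delta\<^sup>2) / 2) * ?S Q - - (complex_of_real (Delta\<^sup>2) / 2) * ?S Q')"
    unfolding gen_fun_eq by (rule norm_exp_diff_le[OF Re_exponent Re_exponent])
  also have "\<dots> = cmod (- (complex_of_real (Delta\<^sup>2) / 2) * (?S Q - ?S Q'))"
    by (simp only: right_diff_distrib)
  also have "\<dots> = Delta\<^sup>2 / 2 * cmod (?S Q - ?S Q')"
    by (simp add: norm_mult norm_divide norm_power)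
  also have "\<dots> \<le> Delta\<^sup>2 / 2 * ((\<Sum>b\<in>UNIV. (field_norm n1 n2 (Jcol n1 n2 J b))\<^sup>2)
       * (\<Sum>x\<in>sites n1 n2. entry_l1 (Mfield Mhat Q x - Mfield Mhat Q' x)) / mu\<^sup>2)"
    by (intro mult_left_mono norm_sum_field_pairing_Kop_inv_diff_le[OF mu symmetric symmetric])
      (simp_all add: Jcol_in_fields)
  finally show ?thesis
    by simp
qed

theorem mainTheorem1:
  fixes Delta mu :: real and n1 n2 :: nat
    and Mhat J :: "nat \<times> nat \<Rightarrow> real^'n^'n"
  assumes "Delta > 0" and "mu > 0" and "n1 \<ge> 1" and "n2 \<ge> 1"
    and "\<forall>x a b. a \<noteq> b \<longrightarrow> Mhat x $ a $ b = 0"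
  shows "(\<forall>Q. (\<forall>x\<in>sites n1 n2. orthogonal_matrix (Q x)) \<longrightarrow>
            bij_betw (Kop Delta n1 n2 mu (Mfield Mhat Q)) (fields n1 n2) (fields n1 n2))
       \<and> (\<exists>C. \<forall>Q Q'. (\<forall>x\<in>sites n1 n2. orthogonal_matrix (Q x)) \<longrightarrow>
                     (\<forall>x\<in>sites n1 n2. orthogonal_matrix (Q' x)) \<longrightarrow>
            cmod (gen_fun Delta n1 n2 mu Mhat J Q - gen_fun Delta n1 n2 mu Mhat J Q')
              \<le> C * field_dist Delta n1 n2 Q Q')"
proof (intro conjI allI impI exI)
  note mu = assms(2) and diag = assms(5)
  show "bij_betw (Kop Delta n1 n2 mu (Mfield Mhat Q)) (fields n1 n2) (fields n1 n2)" for Q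
    using bij_betw_Kop[OF mu] symmetric_Mfield[OF diag] by blast
  fix Q Q' :: "nat \<times> nat \<Rightarrow> real^'n^'n"
  assume Q: "\<forall>x\<in>sites n1 n2. orthogonal_matrix (Q x)"
    and Q': "\<forall>x\<in>sites n1 n2. orthogonal_matrix (Q' x)"
  let ?j = "\<Sum>b\<in>UNIV. (field_norm n1 n2 (Jcol n1 n2 J b))\<^sup>2"
  let ?m = "\<Sum>y\<in>sites n1 n2. \<Sum>k\<in>UNIV. \<bar>Mhat y $ k $ k\<bar>"
  have "cmod (gen_fun Delta n1 n2 mu Mhat J Q - gen_fun Delta n1 n2 mu Mhat J Q')
      \<le> Delta\<^sup>2 / 2 * ?j * (\<Sum>x\<in>sites n1 n2. entry_l1 (Mfield Mhat Q x - Mfield Mhat Q' x)) / mu\<^sup>2"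
    by (rule norm_gen_fun_diff_le[OF mu diag])
  also have "\<dots> \<le> Delta\<^sup>2 / 2 * ?j
      * (2 * real CARD('n) ^ 2 * ?m * (\<Sum>x\<in>sites n1 n2. hs_norm (Q x - Q' x))) / mu\<^sup>2"
    using sum_entry_l1_Mfield_diff_le[OF diag Q Q']
    by (intro divide_right_mono mult_left_mono) (simp_all add: sum_nonneg)
  also have "\<dots> = ?j * real CARD('n) ^ 2 * ?m / mu\<^sup>2 * field_dist Delta n1 n2 Q Q'"
    by (simp add: field_dist_def lint_def)
  finally show "cmod (gen_fun Delta n1 n2 mu Mhat J Q - gen_fun Delta n1 n2 mu Mhat J Q')
      \<le> ?j * real CARD('n) ^ 2 * ?m / mu\<^sup>2 * field_dist Delta n1 n2 Q Q'" .
qed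

end
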